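(* Let $G,H$ be graded groups, $U\subset G$ open, $\Phi:U\to H$ a smooth map and $x\in U$ (no Pansu differentiability or filtration-preservation is assumed). Then for all $i,j\ge1$ and $V\in\mathfrak g_j$, $$\lim_{\varepsilon\to0^+}\varepsilon^{-i}\,\mathrm{pr}_{\mathfrak h,i}\circ\ln_H\big(\Phi_x(\exp_G(\varepsilon^jV))\big)=\begin{cases}0&\text{if } j>i,\\ \mathrm{pr}_{\mathfrak h,i}(\mathfrak d_x\Phi(V))&\text{if } j=i.\end{cases}$$
   Context: A graded group is a connected, simply connected nilpotent real Lie group $G$ whose Lie algebra $\mathfrak g=\bigoplus_{j\ge1}\mathfrak g_j$ (finitely many nonzero) satisfies $[\mathfrak g_i,\mathfrak g_j]\subset\mathfrak g_{i+j}$; $\exp_G$ is a global diffeomorphism with inverse $\ln_G$. $H$ is a graded group with Lie algebra $\mathfrak h=\bigoplus_j\mathfrak h_j$, and $\mathrm{pr}_{\mathfrak h,i}$ denotes the projection onto $\mathfrak h_i$ along $\bigoplus_{j\neq i}\mathfrak h_j$. Notation: $\Phi_x(y):=\Phi(x)^{-1}\Phi(xy)$ (defined when $xy\in U$). $\mathfrak d_x\Phi:=(D_0L_{\Phi(x)})^{-1}\circ D_x\Phi\circ D_0L_x:\mathfrak g\to\mathfrak h$, where $D_0L_x$ is the differential at the identity of the left translation by $x$. *)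

theory Defs
  imports "HOL-Analysis.Analysis"
begin

text \<open>On open sets this is equivalent to being C-infinity.\<close>
definition smooth_on :: "'a::euclidean_space set \<Rightarrow> ('a \<Rightarrow> 'b::real_normed_vector) \<Rightarrow> bool" where
  "smooth_on U f \<longleftrightarrow>
     (\<exists>F. f \<in> F \<and> (\<forall>g\<in>F. continuous_on U g \<and>
        (\<forall>v. \<exists>g'\<in>F. \<forall>y\<in>U. ((\<lambda>t. g (y + t *\<^sub>R v)) has_vector_derivative g' y) (at 0))))"

text \<open>A grading V 1, V 2, ... of a real vector space (V 0 = {0} encodes indexing from 1).\<close>
definition decomp :: "(nat \<Rightarrow> 'a::real_vector set) \<Rightarrow> 'a \<Rightarrow> (nat \<Rightarrow> 'a) \<Rightarrow> bool" where
  "decomp V x c \<longleftrightarrow> (\<forall>k. c k \<in> V k) \<and> finite {k. c k \<noteq> 0} \<and> x = (\<Sum>k\<in>{k. c k \<noteq> 0}. c k)"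

definition graded_decomp :: "(nat \<Rightarrow> 'a::real_vector set) \<Rightarrow> bool" where
  "graded_decomp V \<longleftrightarrow> (\<forall>i. subspace (V i)) \<and> V 0 = {0} \<and> finite {i. V i \<noteq> {0}}
     \<and> (\<forall>x. \<exists>!c. decomp V x c)"

definition grproj :: "(nat \<Rightarrow> 'a::real_vector set) \<Rightarrow> nat \<Rightarrow> 'a \<Rightarrow> 'a" where
  "grproj V i x = (THE c. decomp V x c) i"

text \<open>A graded group in exponential coordinates: the underlying manifold is the Lie algebra
  itself, with identity 0, a smooth associative product for which every line t \<mapsto> t X is a
  one-parameter subgroup (so exp and ln are the identity map), and the Lie bracket
  (computed from the product) respects the grading.\<close>
definition lie_bracket :: "('g::real_normed_vector \<Rightarrow> 'g \<Rightarrow> 'g) \<Rightarrow> 'g \<Rightarrow> 'g \<Rightarrow> 'g" where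
  "lie_bracket m X Y = Lim (at_right 0)
     (\<lambda>t::real. (m (t *\<^sub>R X) (t *\<^sub>R Y) - m (t *\<^sub>R Y) (t *\<^sub>R X)) /\<^sub>R (t ^ 2))"

definition graded_group :: "('g::euclidean_space \<Rightarrow> 'g \<Rightarrow> 'g) \<Rightarrow> (nat \<Rightarrow> 'g set) \<Rightarrow> bool" where
  "graded_group m V \<longleftrightarrow>
     (\<forall>x y z. m (m x y) z = m x (m y z)) \<and>
     (\<forall>x. m 0 x = x \<and> m x 0 = x) \<and>
     (\<forall>X s t. m (s *\<^sub>R X) (t *\<^sub>R X) = (s + t) *\<^sub>R X) \<and>
     smooth_on UNIV (\<lambda>p. m (fst p) (snd p)) \<and>
     graded_decomp V \<and>
     (\<forall>i j X Y. X \<in> V i \<longrightarrow> Y \<in> V j \<longrightarrow> lie_bracket m X Y \<in> V (i + j))"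

text \<open>Phi_x(y) = Phi(x)^{-1} Phi(x y); the group inverse is the additive one in exp. coordinates.\<close>
definition shifted_map :: "('g \<Rightarrow> 'g \<Rightarrow> 'g) \<Rightarrow> ('h::uminus \<Rightarrow> 'h \<Rightarrow> 'h) \<Rightarrow> ('g \<Rightarrow> 'h) \<Rightarrow> 'g \<Rightarrow> 'g \<Rightarrow> 'h" where
  "shifted_map mG mH Phi x y = mH (- Phi x) (Phi (mG x y))"

definition left_diff :: "('g::real_normed_vector \<Rightarrow> 'g \<Rightarrow> 'g) \<Rightarrow> ('h::real_normed_vector \<Rightarrow> 'h \<Rightarrow> 'h) \<Rightarrow> ('g \<Rightarrow> 'h) \<Rightarrow> 'g \<Rightarrow> 'g \<Rightarrow> 'h" where
  "left_diff mG mH Phi x =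
     inv (frechet_derivative (mH (Phi x)) (at 0)) \<circ> frechet_derivative Phi (at x)
       \<circ> frechet_derivative (mG x) (at 0)"

end

theory Submission
  imports Defs
begin

(* In exponential coordinates t \<mapsto> Phi_x(t V) is a differentiable curve through 0.  Left
   translation by Phi(x)^-1 is the inverse map of left translation by Phi(x), so the chain rule
   gives its velocity at 0 as d_x Phi(V), i.e. Phi_x(eps^j V) = eps^j d_x Phi(V) + o(eps^j).
   Projecting linearly onto h_i and dividing by eps^i gives 0 for j > i and pr_i(d_x Phi(V)) for
   j = i.  Smoothness enters only through differentiability, which follows from continuity of the
   partial derivatives. *)

lemma increment_along_line_bound:
  fixes f :: "'a::real_normed_vector \<Rightarrow> 'b::real_normed_vector"
  assumes D: "\<And>t. t \<in> closed_segment 0 c \<Longrightarrow>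
      ((\<lambda>s. f (z + t *\<^sub>R b + s *\<^sub>R b)) has_vector_derivative D t) (at 0)"
    and close: "\<And>t. t \<in> closed_segment 0 c \<Longrightarrow> norm (D t - q) \<le> e"
  shows "norm (f (z + c *\<^sub>R b) - f z - c *\<^sub>R q) \<le> e * \<bar>c\<bar>"
proof -
  define \<phi> where "\<phi> t = f (z + t *\<^sub>R b) - t *\<^sub>R q" for t
  have "(\<phi> has_vector_derivative D t - q) (at t)" if "t \<in> closed_segment 0 c" for t
  proof -
    have "((\<lambda>s. f (z + t *\<^sub>R b + s *\<^sub>R b)) \<circ> (\<lambda>s. s - t) has_vector_derivative 1 *\<^sub>R D t) (at t)"
      using D[OF that] by (intro vector_diff_chain_at) (auto intro!: derivative_eq_intros)
    moreover have "(\<lambda>s. f (z + t *\<^sub>R b + s *\<^sub>R b)) \<circ> (\<lambda>s. s - t) = (\<lambda>s. f (z + s *\<^sub>R b))"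
      by (auto simp: fun_eq_iff algebra_simps)
    ultimately show ?thesis
      unfolding \<phi>_def by (auto intro!: derivative_eq_intros)
  qed
  then have "norm (\<phi> c - \<phi> 0) \<le> e * norm (c - 0)"
    using close
    by (intro differentiable_bound[where f'="\<lambda>t h. h *\<^sub>R (D t - q)" and S="closed_segment 0 c"])
      (auto simp: has_vector_derivative_def mult.commute[of e] intro: has_derivative_at_withinI
        intro!: onorm_le mult_left_mono)
  then show ?thesis
    by (simp add: \<phi>_def algebra_simps)
qed

lemma increment_along_coordinates_bound:
  fixes f :: "'a::euclidean_space \<Rightarrow> 'b::real_normed_vector"
  assumes D: "\<And>b w. b \<in> Basis \<Longrightarrow> w \<in> ball y \<delta> \<Longrightarrow>
      ((\<lambda>t. f (w + t *\<^sub>R b)) has_vector_derivative D b w) (at 0)"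
    and close: "\<And>b w. b \<in> Basis \<Longrightarrow> w \<in> ball y \<delta> \<Longrightarrow> norm (D b w - D b y) \<le> e"
    and B: "finite B" "B \<subseteq> Basis" and small: "(\<Sum>b\<in>B. \<bar>c b\<bar>) < \<delta>"
  shows "norm (f (y + (\<Sum>b\<in>B. c b *\<^sub>R b)) - f y - (\<Sum>b\<in>B. c b *\<^sub>R D b y))
    \<le> e * (\<Sum>b\<in>B. \<bar>c b\<bar>)"
  using B small
proof (induction B rule: finite_induct)
  case empty
  then show ?case by simp
next
  case (insert a B)
  define z where "z = y + (\<Sum>b\<in>B. c b *\<^sub>R b)"
  have a: "a \<in> Basis" and sum_insert: "(\<Sum>b\<in>insert a B. \<bar>c b\<bar>) = \<bar>c a\<bar> + (\<Sum>b\<in>B. \<bar>c b\<bar>)"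
    using insert by auto
  have "norm (z - y) \<le> (\<Sum>b\<in>B. \<bar>c b\<bar>)"
    unfolding z_def using insert.prems norm_sum[of "\<lambda>b. c b *\<^sub>R b" B]
    by (auto simp: subset_iff intro: order.trans[OF _ sum_mono])
  then have on_segment: "z + t *\<^sub>R a \<in> ball y \<delta>" if "t \<in> closed_segment 0 (c a)" for t
    using that a insert.prems sum_insert norm_triangle_ineq[of "z - y" "t *\<^sub>R a"]
    by (auto simp: dist_norm norm_minus_commute closed_segment_eq_real_ivl algebra_simps split: if_splits)
  have "norm (f (z + c a *\<^sub>R a) - f z - c a *\<^sub>R D a y) \<le> e * \<bar>c a\<bar>"
    using D[OF a on_segment] close[OF a on_segment]
    by (intro increment_along_line_bound[where D="\<lambda>t. D a (z + t *\<^sub>R a)"]) auto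
  moreover have "norm (f z - f y - (\<Sum>b\<in>B. c b *\<^sub>R D b y)) \<le> e * (\<Sum>b\<in>B. \<bar>c b\<bar>)"
    using insert sum_insert unfolding z_def by auto
  ultimately show ?case
    using insert.hyps norm_triangle_ineq[of "f (z + c a *\<^sub>R a) - f z - c a *\<^sub>R D a y"
        "f z - f y - (\<Sum>b\<in>B. c b *\<^sub>R D b y)"]
    by (simp add: z_def sum_insert algebra_simps)
qed

lemma continuous_partials_imp_has_derivative:
  fixes f :: "'a::euclidean_space \<Rightarrow> 'b::real_normed_vector"
  assumes D: "\<And>b w. b \<in> Basis \<Longrightarrow> w \<in> U \<Longrightarrow>
      ((\<lambda>t. f (w + t *\<^sub>R b)) has_vector_derivative D b w) (at 0)"
    and cont: "\<And>b. b \<in> Basis \<Longrightarrow> continuous_on U (D b)"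
    and "open U" "y \<in> U"
  shows "(f has_derivative (\<lambda>h. \<Sum>b\<in>Basis. (h \<bullet> b) *\<^sub>R D b y)) (at y)"
proof (unfold has_derivative_at_alt, intro conjI allI impI)
  show "bounded_linear (\<lambda>h. \<Sum>b\<in>Basis. (h \<bullet> b) *\<^sub>R D b y)"
    by (intro bounded_linear_sum) (auto intro!: bounded_linear_intros)
  fix e :: real
  assume "e > 0"
  define e' where "e' = e / DIM('a)"
  have "\<forall>\<^sub>F w in nhds y. w \<in> U \<and> (\<forall>b\<in>Basis. dist (D b w) (D b y) < e')"
  proof (intro eventually_conj eventually_ball_finite ballI)
    show "\<forall>\<^sub>F w in nhds y. w \<in> U"
      using \<open>open U\<close> \<open>y \<in> U\<close> by (rule eventually_nhds_in_open)
    fix b :: 'a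
    assume "b \<in> Basis"
    then have "isCont (D b) y"
      using cont \<open>open U\<close> \<open>y \<in> U\<close> continuous_on_eq_continuous_at by blast
    then show "\<forall>\<^sub>F w in nhds y. dist (D b w) (D b y) < e'"
      using \<open>e > 0\<close> unfolding e'_def isCont_def tendsto_at_iff_tendsto_nhds
      by (intro tendstoD) auto
  qed simp
  then obtain \<delta> where "\<delta> > 0"
    and \<delta>: "\<And>w. dist w y < \<delta> \<Longrightarrow> w \<in> U \<and> (\<forall>b\<in>Basis. dist (D b w) (D b y) < e')"
    unfolding eventually_nhds_metric by blast
  have l1_bound: "(\<Sum>b\<in>Basis. \<bar>h \<bullet> b\<bar>) \<le> DIM('a) * norm h" for h :: 'a
    using sum_mono[of Basis "\<lambda>b. \<bar>h \<bullet> b\<bar>" "\<lambda>_. norm h"] by (simp add: Basis_le_norm)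
  show "\<exists>d>0. \<forall>y'. norm (y' - y) < d \<longrightarrow>
      norm (f y' - f y - (\<Sum>b\<in>Basis. ((y' - y) \<bullet> b) *\<^sub>R D b y)) \<le> e * norm (y' - y)"
  proof (intro exI[of _ "\<delta> / DIM('a)"] conjI allI impI)
    fix y' :: 'a
    assume "norm (y' - y) < \<delta> / DIM('a)"
    then have "(\<Sum>b\<in>Basis. \<bar>(y' - y) \<bullet> b\<bar>) < \<delta>"
      using l1_bound[of "y' - y"] by (simp add: field_simps)
    then have "norm (f (y + (\<Sum>b\<in>Basis. ((y' - y) \<bullet> b) *\<^sub>R b)) - f y
        - (\<Sum>b\<in>Basis. ((y' - y) \<bullet> b) *\<^sub>R D b y)) \<le> e' * (\<Sum>b\<in>Basis. \<bar>(y' - y) \<bullet> b\<bar>)"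
    proof (intro increment_along_coordinates_bound)
      show "((\<lambda>t. f (w + t *\<^sub>R b)) has_vector_derivative D b w) (at 0)"
        if "b \<in> Basis" "w \<in> ball y \<delta>" for b w
        using that D \<delta> by (simp add: dist_commute)
      show "norm (D b w - D b y) \<le> e'" if "b \<in> Basis" "w \<in> ball y \<delta>" for b w
        using that \<delta> by (force simp: dist_commute dist_norm)
    qed auto
    then have "norm (f y' - f y - (\<Sum>b\<in>Basis. ((y' - y) \<bullet> b) *\<^sub>R D b y))
        \<le> e' * (\<Sum>b\<in>Basis. \<bar>(y' - y) \<bullet> b\<bar>)"
      by (simp add: euclidean_representation)
    also have "\<dots> \<le> e * norm (y' - y)"
      using l1_bound[of "y' - y"] \<open>e > 0\<close> by (simp add: e'_def field_simps)
    finally show "norm (f y' - f y - (\<Sum>b\<in>Basis. ((y' - y) \<bullet> b) *\<^sub>R D b y)) \<le> e * norm (y' - y)" .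
  qed (use \<open>\<delta> > 0\<close> in simp)
qed

lemma smooth_on_imp_differentiable:
  fixes f :: "'a::euclidean_space \<Rightarrow> 'b::real_normed_vector"
  assumes "smooth_on U f" "open U" "y \<in> U"
  shows "f differentiable (at y)"
proof -
  obtain F where "f \<in> F" and F: "\<And>g. g \<in> F \<Longrightarrow> continuous_on U g \<and>
      (\<forall>v. \<exists>g'\<in>F. \<forall>w\<in>U. ((\<lambda>t. g (w + t *\<^sub>R v)) has_vector_derivative g' w) (at 0))"
    using assms(1) unfolding smooth_on_def by blast
  then obtain D where "\<And>v. D v \<in> F"
    and "\<And>v w. w \<in> U \<Longrightarrow> ((\<lambda>t. f (w + t *\<^sub>R v)) has_vector_derivative D v w) (at 0)"
    by metis
  then show ?thesis
    using continuous_partials_imp_has_derivative[OF _ _ assms(2,3)] F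
    unfolding differentiable_def by blast
qed

lemma inv_derivative_of_inverse_maps:
  assumes F: "(f has_derivative F) (at a)" and G: "(g has_derivative G) (at (f a))"
    and gf: "\<And>y. g (f y) = y" and fg: "\<And>z. f (g z) = z"
  shows "inv F = G"
proof (rule inv_unique_comp)
  have "(g \<circ> f has_derivative G \<circ> F) (at a)"
    using F G by (rule diff_chain_at)
  moreover have "g \<circ> f = id"
    using gf by auto
  ultimately show "G \<circ> F = id"
    using has_derivative_id has_derivative_unique by metis
  have "(f \<circ> g has_derivative F \<circ> G) (at (f a))"
    using G F gf[of a] by (intro diff_chain_at) auto
  moreover have "f \<circ> g = id"
    using fg by auto
  ultimately show "F \<circ> G = id"
    using has_derivative_id has_derivative_unique by metis
qed

lemma has_vector_derivative_difference_quotient: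
  assumes "(g has_vector_derivative w) (at a)"
  shows "((\<lambda>h. (g (a + h) - g a) /\<^sub>R h) \<longlongrightarrow> w) (at 0)"
proof -
  have "((\<lambda>h. norm (g (a + h) - g a - h *\<^sub>R w) / norm h) \<longlongrightarrow> 0) (at 0)"
    using assms by (simp add: has_vector_derivative_def has_derivative_at)
  moreover have "norm (g (a + h) - g a - h *\<^sub>R w) / norm h = norm ((g (a + h) - g a) /\<^sub>R h - w)"
    if "h \<noteq> 0" for h
  proof -
    have "g (a + h) - g a - h *\<^sub>R w = h *\<^sub>R ((g (a + h) - g a) /\<^sub>R h - w)"
      using that by (simp add: algebra_simps)
    then show ?thesis
      using that by simp
  qed
  then have "\<forall>\<^sub>F h in at 0.
      norm (g (a + h) - g a - h *\<^sub>R w) / norm h = norm ((g (a + h) - g a) /\<^sub>R h - w)"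
    by (auto simp: eventually_at_filter)
  ultimately show ?thesis
    by (simp add: tendsto_cong tendsto_norm_zero_iff LIM_zero_iff)
qed

lemma tendsto_rescaled_curve:
  fixes g :: "real \<Rightarrow> 'a::real_normed_vector"
  assumes g: "(g has_vector_derivative w) (at 0)" and "g 0 = 0" and "i \<le> j" "1 \<le> j"
  shows "((\<lambda>\<epsilon>. inverse (\<epsilon> ^ i) *\<^sub>R g (\<epsilon> ^ j)) \<longlongrightarrow> (if j = i then w else 0)) (at_right 0)"
proof -
  have slope: "((\<lambda>h. g h /\<^sub>R h) \<longlongrightarrow> w) (at 0)"
    using has_vector_derivative_difference_quotient[OF g] \<open>g 0 = 0\<close> by simp
  have "filterlim (\<lambda>\<epsilon>::real. \<epsilon> ^ j) (at 0) (at_right 0)"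
    unfolding filterlim_at using \<open>1 \<le> j\<close>
    by (auto simp: eventually_at_filter intro!: tendsto_eq_intros)
  with slope have "((\<lambda>\<epsilon>. \<epsilon> ^ (j - i) *\<^sub>R (g (\<epsilon> ^ j) /\<^sub>R \<epsilon> ^ j)) \<longlongrightarrow> 0 ^ (j - i) *\<^sub>R w) (at_right 0)"
    by (intro tendsto_intros filterlim_compose[OF slope])
  moreover have "\<forall>\<^sub>F \<epsilon> in at_right 0. \<epsilon> ^ (j - i) *\<^sub>R (g (\<epsilon> ^ j) /\<^sub>R \<epsilon> ^ j) = inverse (\<epsilon> ^ i) *\<^sub>R g (\<epsilon> ^ j)"
    using \<open>i \<le> j\<close> by (auto simp: eventually_at_filter power_diff field_simps)
  ultimately have "((\<lambda>\<epsilon>. inverse (\<epsilon> ^ i) *\<^sub>R g (\<epsilon> ^ j)) \<longlongrightarrow> 0 ^ (j - i) *\<^sub>R w) (at_right 0)"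
    by (rule Lim_transform_eventually)
  moreover have "(0::real) ^ (j - i) *\<^sub>R w = (if j = i then w else 0)"
    using \<open>i \<le> j\<close> by auto
  ultimately show ?thesis
    by simp
qed

lemma decomp_add:
  assumes "decomp V x c" "decomp V y d" "\<And>k. subspace (V k)"
  shows "decomp V (x + y) (\<lambda>k. c k + d k)"
proof -
  let ?A = "{k. c k \<noteq> 0} \<union> {k. d k \<noteq> 0}"
  have fin: "finite ?A" and mem: "\<And>k. c k + d k \<in> V k"
    using assms by (auto simp: decomp_def subspace_add)
  have "(\<Sum>k\<in>?A. c k) = x" "(\<Sum>k\<in>?A. d k) = y"
    using assms(1,2) fin unfolding decomp_def by (auto intro!: sum.mono_neutral_right)
  then have "x + y = (\<Sum>k\<in>?A. c k) + (\<Sum>k\<in>?A. d k)"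
    by simp
  also have "\<dots> = (\<Sum>k\<in>{k. c k + d k \<noteq> 0}. c k + d k)"
    using fin by (auto simp: sum.distrib[symmetric] intro!: sum.mono_neutral_right)
  finally have "x + y = (\<Sum>k\<in>{k. c k + d k \<noteq> 0}. c k + d k)" .
  moreover have "finite {k. c k + d k \<noteq> 0}"
    using fin by (rule finite_subset[rotated]) auto
  ultimately show ?thesis
    using mem unfolding decomp_def by blast
qed

lemma decomp_scaleR:
  assumes "decomp V x c" "\<And>k. subspace (V k)"
  shows "decomp V (a *\<^sub>R x) (\<lambda>k. a *\<^sub>R c k)"
proof -
  have fin: "finite {k. c k \<noteq> 0}" and mem: "\<And>k. a *\<^sub>R c k \<in> V k"
    using assms by (auto simp: decomp_def subspace_scale)
  have "a *\<^sub>R x = (\<Sum>k\<in>{k. c k \<noteq> 0}. a *\<^sub>R c k)"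
    using assms(1) by (simp add: decomp_def scaleR_sum_right)
  also have "\<dots> = (\<Sum>k\<in>{k. a *\<^sub>R c k \<noteq> 0}. a *\<^sub>R c k)"
    using fin by (auto intro!: sum.mono_neutral_right)
  finally show ?thesis
    using fin mem unfolding decomp_def by (auto elim: finite_subset[rotated])
qed

lemma linear_grproj:
  assumes "graded_decomp V"
  shows "linear (grproj V i)"
proof -
  have sub: "\<And>k. subspace (V k)" and uniq: "\<And>x. \<exists>!c. decomp V x c"
    using assms by (auto simp: graded_decomp_def)
  have the_decomp: "(THE c. decomp V x c) = c" if "decomp V x c" for x c
    using uniq that by (metis the1_equality)
  have decomp_the: "decomp V x (THE c. decomp V x c)" for x
    using uniq by (rule theI')
  show ?thesis
  proof (rule linearI)
    show "grproj V i (x + y) = grproj V i x + grproj V i y" for x y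
      unfolding grproj_def by (subst the_decomp[OF decomp_add[OF decomp_the decomp_the sub]]) simp
    show "grproj V i (a *\<^sub>R x) = a *\<^sub>R grproj V i x" for a x
      unfolding grproj_def by (subst the_decomp[OF decomp_scaleR[OF decomp_the sub]]) simp
  qed
qed

lemma graded_group_monoid:
  assumes "graded_group m V"
  shows "m (m x y) z = m x (m y z)" "m 0 x = x" "m x 0 = x"
  using assms by (simp_all add: graded_group_def)

lemma graded_group_inverse:
  assumes "graded_group m V"
  shows "m (- x) x = 0" "m x (- x) = 0"
proof -
  have "m (s *\<^sub>R x) (t *\<^sub>R x) = (s + t) *\<^sub>R x" for s t
    using assms by (simp add: graded_group_def)
  from this[of "-1" 1] this[of 1 "-1"] show "m (- x) x = 0" "m x (- x) = 0"
    by simp_all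
qed

lemma differentiable_left_translation:
  fixes m :: "'g::euclidean_space \<Rightarrow> 'g \<Rightarrow> 'g"
  assumes "graded_group m V"
  shows "m a differentiable (at z)"
proof -
  have "(\<lambda>p. m (fst p) (snd p)) differentiable (at (a, z))"
    using assms by (intro smooth_on_imp_differentiable[of UNIV]) (auto simp: graded_group_def)
  moreover have "Pair a differentiable (at z)"
    unfolding differentiable_def by (auto intro!: derivative_eq_intros)
  ultimately have "((\<lambda>p. m (fst p) (snd p)) \<circ> Pair a) differentiable (at z)"
    by (intro differentiable_chain_at) auto
  then show ?thesis
    by (simp add: o_def)
qed

lemma shifted_map_zero:
  assumes "graded_group mG VG" "graded_group mH VH"
  shows "shifted_map mG mH Phi x 0 = 0"
  using assms by (simp add: shifted_map_def graded_group_monoid graded_group_inverse)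

lemma left_diff_eq:
  fixes mH :: "'h::euclidean_space \<Rightarrow> 'h \<Rightarrow> 'h"
  assumes H: "graded_group mH VH"
  shows "left_diff mG mH Phi x = frechet_derivative (mH (- Phi x)) (at (Phi x))
    \<circ> frechet_derivative Phi (at x) \<circ> frechet_derivative (mG x) (at 0)"
proof -
  have cancel: "mH (- Phi x) (mH (Phi x) y) = y" "mH (Phi x) (mH (- Phi x) y) = y" for y
    using H by (simp_all add: graded_group_inverse graded_group_monoid flip: graded_group_monoid(1))
  have "(mH (Phi x) has_derivative frechet_derivative (mH (Phi x)) (at 0)) (at 0)"
    and "(mH (- Phi x) has_derivative frechet_derivative (mH (- Phi x)) (at (Phi x)))
      (at (mH (Phi x) 0))"
    using H differentiable_left_translation graded_group_monoid(3)[OF H]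
    by (simp_all add: frechet_derivative_works[symmetric])
  then have "inv (frechet_derivative (mH (Phi x)) (at 0))
      = frechet_derivative (mH (- Phi x)) (at (Phi x))"
    using cancel by (intro inv_derivative_of_inverse_maps)
  then show ?thesis
    by (simp add: left_diff_def)
qed

lemma shifted_map_line_has_vector_derivative:
  fixes mG :: "'g::euclidean_space \<Rightarrow> 'g \<Rightarrow> 'g" and mH :: "'h::euclidean_space \<Rightarrow> 'h \<Rightarrow> 'h"
  assumes G: "graded_group mG VG" and H: "graded_group mH VH" and "Phi differentiable (at x)"
  shows "((\<lambda>t. shifted_map mG mH Phi x (t *\<^sub>R V)) has_vector_derivative left_diff mG mH Phi x V) (at 0)"
proof -
  define dG dPhi dH' where "dG = frechet_derivative (mG x) (at 0)"
    and "dPhi = frechet_derivative Phi (at x)"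
    and "dH' = frechet_derivative (mH (- Phi x)) (at (Phi x))"
  have dG: "(mG x has_derivative dG) (at 0)" and dPhi: "(Phi has_derivative dPhi) (at x)"
    and dH': "(mH (- Phi x) has_derivative dH') (at (Phi x))"
    unfolding dG_def dPhi_def dH'_def
    using assms differentiable_left_translation frechet_derivative_works by blast+
  have "((\<lambda>t. t *\<^sub>R V) has_derivative (\<lambda>t. t *\<^sub>R V)) (at 0)"
    by (rule has_derivative_scaleR_left[OF has_derivative_ident])
  then have "((\<lambda>t. mG x (t *\<^sub>R V)) has_derivative (\<lambda>t. dG (t *\<^sub>R V))) (at 0)"
    by (rule has_derivative_compose) (use dG in simp)
  then have "((\<lambda>t. Phi (mG x (t *\<^sub>R V))) has_derivative (\<lambda>t. dPhi (dG (t *\<^sub>R V)))) (at 0)"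
    by (rule has_derivative_compose) (use dPhi graded_group_monoid(3)[OF G] in simp)
  then have "((\<lambda>t. mH (- Phi x) (Phi (mG x (t *\<^sub>R V))))
      has_derivative (\<lambda>t. dH' (dPhi (dG (t *\<^sub>R V))))) (at 0)"
    by (rule has_derivative_compose) (use dH' graded_group_monoid(3)[OF G] in simp)
  moreover have "dH' (dPhi (dG (t *\<^sub>R V))) = t *\<^sub>R (dH' \<circ> dPhi \<circ> dG) V" for t
    using dG dPhi dH' by (simp add: linear_scale has_derivative_linear)
  ultimately show ?thesis
    by (simp add: has_vector_derivative_def shifted_map_def left_diff_eq[OF H] dG_def dPhi_def dH'_def)
qed

theorem lemma2p6:
  fixes mG :: "'g::euclidean_space \<Rightarrow> 'g \<Rightarrow> 'g" and VG :: "nat \<Rightarrow> 'g set"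
    and mH :: "'h::euclidean_space \<Rightarrow> 'h \<Rightarrow> 'h" and VH :: "nat \<Rightarrow> 'h set"
    and Phi :: "'g \<Rightarrow> 'h" and U :: "'g set" and x :: 'g
    and i j :: nat and V :: 'g
  assumes "graded_group mG VG" and "graded_group mH VH"
    and "open U" and "smooth_on U Phi" and "x \<in> U"
    and "i \<ge> 1" and "j \<ge> 1" and "V \<in> VG j"
  shows "(j > i \<longrightarrow>
            ((\<lambda>\<epsilon>::real. inverse (\<epsilon> ^ i) *\<^sub>R grproj VH i (shifted_map mG mH Phi x ((\<epsilon> ^ j) *\<^sub>R V)))
               \<longlongrightarrow> 0) (at_right 0))
       \<and> (j = i \<longrightarrow>
            ((\<lambda>\<epsilon>::real. inverse (\<epsilon> ^ i) *\<^sub>R grproj VH i (shifted_map mG mH Phi x ((\<epsilon> ^ j) *\<^sub>R V)))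
               \<longlongrightarrow> grproj VH i (left_diff mG mH Phi x V)) (at_right 0))"
proof -
  have proj: "bounded_linear (grproj VH i)"
    using assms(2) linear_grproj linear_conv_bounded_linear unfolding graded_group_def by blast
  have "Phi differentiable (at x)"
    using assms(4,3,5) by (rule smooth_on_imp_differentiable)
  then have "((\<lambda>t. grproj VH i (shifted_map mG mH Phi x (t *\<^sub>R V)))
      has_vector_derivative grproj VH i (left_diff mG mH Phi x V)) (at 0)"
    using assms(1,2) by (intro bounded_linear.has_vector_derivative[OF proj]
        shifted_map_line_has_vector_derivative)
  moreover have "grproj VH i (shifted_map mG mH Phi x (0 *\<^sub>R V)) = 0"
    using assms(1,2) proj by (simp add: shifted_map_zero linear_simps)
  ultimately have "i \<le> j \<Longrightarrow>
      ((\<lambda>\<epsilon>. inverse (\<epsilon> ^ i) *\<^sub>R grproj VH i (shifted_map mG mH Phi x ((\<epsilon> ^ j) *\<^sub>R V)))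
        \<longlongrightarrow> (if j = i then grproj VH i (left_diff mG mH Phi x V) else 0)) (at_right 0)"
    using \<open>j \<ge> 1\<close> tendsto_rescaled_curve by fastforce
  then show ?thesis
    by auto
qed

end
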